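(* Let $n\ge 2$. Every $1$-Costas permutation $\pi$ of $\{1,\ldots,n\}$ satisfies $\delta(\pi)\ge\lceil n/2\rceil$, and there exists a $1$-Costas permutation $\pi^*$ of $\{1,\ldots,n\}$ with $\delta(\pi^* )=\lceil n/2\rceil$. Such a $\pi^*$ is given, according to the parity of $n$, by the permutation matrix: (i) if $n=2k$: $P_{\pi^*}=\Pi_k\oplus L_k\Pi_k$; (ii) if $n=2k+1$ with $k$ even: $P_{\pi^*}=\begin{bmatrix} O & L_{k+1}\Pi_{k+1}\\ \Pi_k & O\end{bmatrix}$; (iii) if $n=2k+1$ with $k$ odd: $P_{\pi^*}=\begin{bmatrix} O & L_{k+1}\Pi_{k+1}L_{k+1}\\ \Pi_k L_k & O\end{bmatrix}$. Moreover, in each case $\pi^*$ attains the minimum of the global variation $\Delta(\pi)$ over all $1$-Costas permutations $\pi$ of $\{1,\ldots,n\}$, and this minimum equals $n^2/4$ if $n$ is even and $(n^2+3)/4$ if $n$ is odd.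
   Context: For a permutation $\pi=(\pi_1,\ldots,\pi_n)$ of $\{1,\ldots,n\}$: its discrete derivative is $D(\pi)=(\pi_2-\pi_1,\ldots,\pi_n-\pi_{n-1})$; its local variation is $\delta(\pi)=\max_i|\pi_{i+1}-\pi_i|$; its global variation is $\Delta(\pi)=\sum_{i=1}^{n-1}|\pi_{i+1}-\pi_i|$. $\pi$ is $1$-Costas if the $n-1$ entries of $D(\pi)$ are pairwise distinct. $P_\pi$ is the $n\times n$ permutation matrix with $1$ in positions $(i,\pi_i)$ and $0$ elsewhere. $L_m$ is the $m\times m$ backward identity matrix (ones in positions $(i,m+1-i)$), so $L_mP$ reverses the order of the rows of $P$ and $PL_m$ reverses the order of its columns. For $m\ge1$, $\Pi_m=P_{\pi_{(m)}}$ where $\pi_{(m)}$ is the permutation of $\{1,\ldots,m\}$ defined by: if $m=2p$, $\pi_{(m)}=(p,p+1,p-1,p+2,p-2,\ldots,1,2p)$, i.e. $\pi_{(m)}(2j-1)=p+1-j$, $\pi_{(m)}(2j)=p+j$ for $1\le j\le p$; if $m=2p+1$, $\pi_{(m)}=(p+1,p+2,p,p+3,p-1,\ldots,2p+1,1)$, i.e. $\pi_{(m)}(2j-1)=p+2-j$ for $1\le j\le p+1$ and $\pi_{(m)}(2j)=p+1+j$ for $1\le j\le p$. (Its derivative is $(1,-2,3,-4,\ldots)$.) $A\oplus B$ denotes the block diagonal matrix; in (ii),(iii) the block $L_{k+1}\Pi_{k+1}$ (resp. $L_{k+1}\Pi_{k+1}L_{k+1}$) occupies rows $1,\ldots,k+1$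 and columns $k+1,\ldots,2k+1$, the $k\times k$ block occupies rows $k+2,\ldots,2k+1$ and columns $1,\ldots,k$, and $O$ denotes zero blocks. *)

theory Defs
  imports "HOL-Combinatorics.Permutations" "Jordan_Normal_Form.Matrix" Complex_Main
begin

definition disc_deriv :: "nat \<Rightarrow> (nat \<Rightarrow> nat) \<Rightarrow> int list" where
  "disc_deriv n p = map (\<lambda>i. int (p (Suc i)) - int (p i)) [1..<n]"

definition one_costas :: "nat \<Rightarrow> (nat \<Rightarrow> nat) \<Rightarrow> bool" where
  "one_costas n p \<longleftrightarrow> p permutes {1..n} \<and> distinct (disc_deriv n p)"

definition local_var :: "nat \<Rightarrow> (nat \<Rightarrow> nat) \<Rightarrow> int" where
  "local_var n p = Max (set (map abs (disc_deriv n p)))"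

definition global_var :: "nat \<Rightarrow> (nat \<Rightarrow> nat) \<Rightarrow> int" where
  "global_var n p = sum_list (map abs (disc_deriv n p))"

text \<open>Permutation matrix: entry (i,j) (1-based) is 1 iff p i = j; JNF matrices are 0-based.\<close>
definition perm_mat :: "nat \<Rightarrow> (nat \<Rightarrow> nat) \<Rightarrow> int mat" where
  "perm_mat n p = mat n n (\<lambda>(i,j). if p (Suc i) = Suc j then 1 else 0)"

text \<open>Backward identity L_m: ones at 1-based positions (i, m+1-i).\<close>
definition back_id :: "nat \<Rightarrow> int mat" where
  "back_id m = mat m m (\<lambda>(i,j). if Suc j = m + 1 - Suc i then 1 else 0)"

definition pi_m :: "nat \<Rightarrow> nat \<Rightarrow> nat" where
  "pi_m m i =
     (if i < 1 \<or> i > m then i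
      else if even m then
        (let p = m div 2 in
          if odd i then p + 1 - (i + 1) div 2 else p + i div 2)
      else
        (let p = m div 2 in
          if odd i then p + 2 - (i + 1) div 2 else p + 1 + i div 2))"

definition Pi_mat :: "nat \<Rightarrow> int mat" where
  "Pi_mat m = perm_mat m (pi_m m)"

end

(* The discrete derivative of a 1-Costas permutation of {1..n} consists of n - 1 distinct nonzero
   integers whose sum p n - p 1 is nonzero.  A set of 2M such integers cannot lie in [-M, M], since it
   would then be all of [-M, M] - {0}, whose sum is 0; this gives the bound on the local variation.
   Distinct nonzero integers have absolute values at least 1, 1, 2, 2, 3, ..., which gives the bound
   on the global variation, the nonzero sum supplying one extra unit when n is odd.
   The optimal permutations concatenate two copies of pi_(m), whose derivative is (1, -2, 3, -4, ...).
   Reversing one copy flips the signs of its derivative, so the two blocks use each absolute value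
   below n/2 at most once with each sign, and the junction step has absolute value ceiling (n/2). *)

theory Submission
  imports Defs
begin

section \<open>Sets of distinct nonzero integers\<close>

lemma card_punctured_interval: "card ({-int M..int M} - {0}) = 2 * M"
  by (simp add: card_Diff_singleton)

lemma sum_punctured_interval: "\<Sum>({-int M..int M} - {0}) = 0"
proof -
  let ?T = "{-int M..int M} - {0}"
  have "\<Sum>?T = (\<Sum>x\<in>?T. - x)"
    by (rule sum.reindex_bij_witness[of _ uminus uminus]) auto
  then show ?thesis by (simp add: sum_negf)
qed

lemma punctured_interval_if_abs_le:
  "0 \<notin> S \<Longrightarrow> (\<And>x. x \<in> S \<Longrightarrow> \<bar>x\<bar> \<le> int M) \<Longrightarrow> S \<subseteq> {-int M..int M} - {0}"
  by (force simp: abs_le_iff)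

lemma nonzero_sum_has_large_element:
  fixes S :: "int set"
  assumes "finite S" "0 \<notin> S" "\<Sum>S \<noteq> 0" "2 * M \<le> card S"
  shows "\<exists>x\<in>S. int M < \<bar>x\<bar>"
proof (rule ccontr)
  assume "\<not> ?thesis"
  then have sub: "S \<subseteq> {-int M..int M} - {0}"
    using assms(2) by (intro punctured_interval_if_abs_le) auto
  moreover have "card S \<le> 2 * M"
    using card_mono[OF _ sub] by (simp add: card_punctured_interval)
  ultimately have "S = {-int M..int M} - {0}"
    using assms(4) by (intro card_subset_eq) (auto simp: card_punctured_interval)
  then show False
    using assms(3) sum_punctured_interval by simp
qed

(* That is, the sum is at least floor ((card S + 1)^2 / 4), attained by {1, -1, 2, -2, ...}. *)
lemma sum_abs_nonzero_lower_bound: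
  fixes S :: "int set"
  assumes "finite S" "0 \<notin> S"
  shows "int (card S + 1)^2 \<le> 4 * (\<Sum>x\<in>S. \<bar>x\<bar>) + 1"
  using assms
proof (induction S rule: finite_ranking_induct[where f = abs])
  case empty
  then show ?case by simp
next
  case (insert x S)
  show ?case
  proof (cases "x \<in> S")
    case True
    then show ?thesis using insert by (simp add: insert_absorb)
  next
    case False
    let ?N = "card S"
    have "insert x S \<subseteq> {-int (nat \<bar>x\<bar>)..int (nat \<bar>x\<bar>)} - {0}"
      using insert.hyps(2) insert.prems by (intro punctured_interval_if_abs_le) auto
    from card_mono[OF _ this] have "?N + 1 \<le> 2 * nat \<bar>x\<bar>"
      using False insert.hyps(1) by (simp add: card_punctured_interval)
    then have x: "int ?N + 1 \<le> 2 * \<bar>x\<bar>" by linarith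
    have IH: "int (?N + 1)^2 \<le> 4 * (\<Sum>x\<in>S. \<bar>x\<bar>) + 1" using insert by simp
    have "int (?N + 2)^2 \<le> 4 * (\<bar>x\<bar> + (\<Sum>x\<in>S. \<bar>x\<bar>)) + 1"
    proof (cases "even ?N")
      case True
      then have "int ?N + 2 \<le> 2 * \<bar>x\<bar>" using x by presburger
      then show ?thesis using IH by (simp add: power2_eq_square algebra_simps)
    next
      case False
      then obtain m where m: "?N + 1 = 2 * m" by (metis evenE odd_add odd_one)
      then have sq: "int (?N + 1)^2 = 4 * int m ^ 2" by (simp only: m) (simp add: power_mult_distrib)
      then have "int m ^ 2 \<le> (\<Sum>x\<in>S. \<bar>x\<bar>)" using IH by linarith
      then have "int (?N + 1)^2 \<le> 4 * (\<Sum>x\<in>S. \<bar>x\<bar>)" using sq by linarith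
      then show ?thesis using x by (simp add: power2_eq_square algebra_simps)
    qed
    then show ?thesis using False insert.hyps(1) by simp
  qed
qed

lemma sum_abs_odd_card_lower_bound:
  fixes S :: "int set"
  assumes "finite S" "0 \<notin> S" "card S + 1 = 2 * k"
  shows "int k ^ 2 \<le> (\<Sum>x\<in>S. \<bar>x\<bar>)"
proof -
  have "int (card S + 1)^2 = 4 * int k ^ 2"
    by (simp only: assms(3)) (simp add: power_mult_distrib)
  then show ?thesis
    using sum_abs_nonzero_lower_bound[OF assms(1,2)] by linarith
qed

section \<open>Lower bounds\<close>

lemma length_disc_deriv [simp]: "length (disc_deriv n p) = n - 1"
  by (simp add: disc_deriv_def)

lemma nth_disc_deriv: "i < n - 1 \<Longrightarrow> disc_deriv n p ! i = int (p (i + 2)) - int (p (i + 1))"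
  by (simp add: disc_deriv_def)

lemma sum_list_disc_deriv:
  assumes "1 \<le> n"
  shows "sum_list (disc_deriv n p) = int (p n) - int (p 1)"
proof -
  have "sum_list (disc_deriv n p) = (\<Sum>i = 1..<n. int (p (Suc i)) - int (p i))"
    by (simp add: disc_deriv_def interv_sum_list_conv_sum_set_nat)
  also have "\<dots> = int (p n) - int (p 1)"
    using assms by (subst sum_Suc_diff') auto
  finally show ?thesis .
qed

lemma zero_notin_disc_deriv:
  assumes "p permutes {1..n}"
  shows "0 \<notin> set (disc_deriv n p)"
  using permutes_inj[OF assms] by (auto simp: disc_deriv_def inj_eq)

lemma local_var_le_iff:
  assumes "2 \<le> n"
  shows "local_var n p \<le> c \<longleftrightarrow> (\<forall>x\<in>set (disc_deriv n p). \<bar>x\<bar> \<le> c)"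
proof -
  have "disc_deriv n p \<noteq> []"
    using assms by (simp add: disc_deriv_def)
  then show ?thesis
    unfolding local_var_def by (simp add: Max_le_iff)
qed

lemma global_var_eq_sum_abs:
  "one_costas n p \<Longrightarrow> global_var n p = (\<Sum>x\<in>set (disc_deriv n p). \<bar>x\<bar>)"
  by (simp add: global_var_def one_costas_def sum_list_distinct_conv_sum_set)

lemma one_costas_deriv_set:
  assumes "one_costas n p" "2 \<le> n"
  shows "card (set (disc_deriv n p)) = n - 1" "0 \<notin> set (disc_deriv n p)"
    "\<Sum>(set (disc_deriv n p)) \<noteq> 0"
proof -
  have perm: "p permutes {1..n}" and dist: "distinct (disc_deriv n p)"
    using assms(1) by (auto simp: one_costas_def)
  show "card (set (disc_deriv n p)) = n - 1"
    using distinct_card[OF dist] by simp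
  show "0 \<notin> set (disc_deriv n p)"
    using perm by (rule zero_notin_disc_deriv)
  have "p n \<noteq> p 1"
    using assms(2) permutes_inj[OF perm] by (simp add: inj_eq)
  then show "\<Sum>(set (disc_deriv n p)) \<noteq> 0"
    using assms(2) sum_list_disc_deriv[of n p] by (simp add: distinct_sum_list_conv_Sum[OF dist, symmetric])
qed

lemma local_var_lower_bound:
  assumes "one_costas n p" "2 \<le> n"
  shows "int ((n + 1) div 2) \<le> local_var n p"
proof -
  let ?S = "set (disc_deriv n p)"
  note S = one_costas_deriv_set[OF assms]
  obtain x where x: "x \<in> ?S" "int ((n - 1) div 2) < \<bar>x\<bar>"
    using nonzero_sum_has_large_element[of ?S "(n - 1) div 2"] S by auto
  have "\<bar>x\<bar> \<le> local_var n p"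
    using x(1) local_var_le_iff[OF assms(2)] by blast
  moreover have "int ((n + 1) div 2) = int ((n - 1) div 2) + 1"
    using assms(2) by presburger
  ultimately show ?thesis
    using x(2) by linarith
qed

lemma global_var_lower_bound:
  assumes "one_costas n p" "2 \<le> n"
  shows "int (n^2 + 3 * (n mod 2)) \<le> 4 * global_var n p"
proof -
  let ?S = "set (disc_deriv n p)"
  note S = one_costas_deriv_set[OF assms]
  show ?thesis
  proof (cases "even n")
    case True
    then obtain k where k: "n = 2 * k" by blast
    have "card ?S + 1 = 2 * k"
      using S(1) k assms(2) by simp
    then have "int k ^ 2 \<le> (\<Sum>x\<in>?S. \<bar>x\<bar>)"
      using S(2) by (intro sum_abs_odd_card_lower_bound) auto
    moreover have "int (n^2 + 3 * (n mod 2)) = 4 * int k ^ 2"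
      using k by (simp add: power_mult_distrib)
    ultimately show ?thesis
      using global_var_eq_sum_abs[OF assms(1)] by linarith
  next
    case False
    then obtain k where k: "n = 2 * k + 1" using oddE by blast
    obtain x where x: "x \<in> ?S" "int k < \<bar>x\<bar>"
      using nonzero_sum_has_large_element[of ?S k] S k by auto
    have "card (?S - {x}) + 1 = 2 * k"
      using S(1) k x(1) assms(2) by simp
    then have "int k ^ 2 \<le> (\<Sum>x\<in>?S - {x}. \<bar>x\<bar>)"
      using S(2) by (intro sum_abs_odd_card_lower_bound) auto
    moreover have "(\<Sum>x\<in>?S. \<bar>x\<bar>) = \<bar>x\<bar> + (\<Sum>x\<in>?S - {x}. \<bar>x\<bar>)"
      using x by (simp add: sum.remove)
    ultimately have "int k ^ 2 + int k + 1 \<le> global_var n p"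
      using x(2) global_var_eq_sum_abs[OF assms(1)] by linarith
    moreover have "n mod 2 = 1"
      using False by presburger
    ultimately show ?thesis
      using k by (simp add: power2_eq_square algebra_simps)
  qed
qed

section \<open>Reversal and concatenation of permutations\<close>

definition zigzag :: "nat \<Rightarrow> int" where
  "zigzag i = (if odd i then int i else - int i)"

lemma abs_zigzag [simp]: "\<bar>zigzag i\<bar> = int i"
  by (simp add: zigzag_def)

lemma inj_zigzag: "inj zigzag"
  by (rule injI) (simp add: zigzag_def split: if_splits)

lemma zigzag_eq_neg_zigzag_iff: "zigzag i = - zigzag j \<longleftrightarrow> i = 0 \<and> j = 0"
  by (cases "odd i"; cases "odd j") (auto simp: zigzag_def)

lemma pi_m_eq:
  assumes "1 \<le> i" "i \<le> m"
  shows "int (pi_m m i) = int ((m + 1) div 2) + (if odd i then - int (i div 2) else int (i div 2))"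
proof -
  have "odd i \<Longrightarrow> i div 2 \<le> m div 2" using assms(2) by (simp add: div_le_mono)
  moreover have "odd i \<Longrightarrow> even m \<Longrightarrow> i div 2 < m div 2" using assms by presburger
  moreover have "odd i \<Longrightarrow> (i + 1) div 2 = i div 2 + 1" by presburger
  moreover have "(m + 1) div 2 = (if even m then m div 2 else m div 2 + 1)" by presburger
  ultimately show ?thesis
    using assms unfolding pi_m_def Let_def by auto
qed

lemma pi_m_in_range: "i \<in> {1..m} \<Longrightarrow> pi_m m i \<in> {1..m}"
  using pi_m_eq[of i m] by (auto split: if_splits) presburger+

lemma inj_on_pi_m: "inj_on (pi_m m) {1..m}"
proof (rule inj_onI)
  fix i j assume "i \<in> {1..m}" "j \<in> {1..m}" "pi_m m i = pi_m m j"
  then have "(if odd i then - int (i div 2) else int (i div 2)) = (if odd j then - int (j div 2) else int (j div 2))"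
    using pi_m_eq[of i m] pi_m_eq[of j m] by auto
  then show "i = j"
    using \<open>i \<in> {1..m}\<close> \<open>j \<in> {1..m}\<close> by (auto split: if_splits) presburger+
qed

lemma pi_m_permutes: "pi_m m permutes {1..m}"
proof (rule bij_imp_permutes)
  show "bij_betw (pi_m m) {1..m} {1..m}"
    using inj_on_pi_m pi_m_in_range by (intro bij_betw_imageI endo_inj_surj) auto
  show "pi_m m i = i" if "i \<notin> {1..m}" for i
    using that by (auto simp: pi_m_def)
qed

lemma pi_m_first: "1 \<le> m \<Longrightarrow> pi_m m 1 = (m + 1) div 2"
  using pi_m_eq[of 1 m] by simp

lemma disc_deriv_pi_m: "disc_deriv m (pi_m m) = map zigzag [1..<m]"
proof -
  have "int (pi_m m (Suc i)) - int (pi_m m i) = zigzag i" if "1 \<le> i" "i < m" for i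
  proof -
    have "Suc i div 2 = (if odd i then i div 2 + 1 else i div 2)" by presburger
    moreover have "int i = 2 * int (i div 2) + (if odd i then 1 else 0)" by presburger
    ultimately show ?thesis
      using that pi_m_eq[of i m] pi_m_eq[of "Suc i" m] by (simp add: zigzag_def)
  qed
  then show ?thesis
    by (simp add: disc_deriv_def)
qed

definition reverse_perm :: "nat \<Rightarrow> nat \<Rightarrow> nat" where
  "reverse_perm m i = (if i \<in> {1..m} then m + 1 - i else i)"

lemma reverse_perm_permutes: "reverse_perm m permutes {1..m}"
proof (rule bij_imp_permutes)
  show "bij_betw (reverse_perm m) {1..m} {1..m}"
    by (rule bij_betw_byWitness[where f' = "reverse_perm m"]) (auto simp: reverse_perm_def)
qed (auto simp: reverse_perm_def)

lemma disc_deriv_comp_reverse_perm: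
  "disc_deriv m (p \<circ> reverse_perm m) = map uminus (rev (disc_deriv m p))"
  by (rule nth_equalityI) (auto simp: nth_disc_deriv rev_nth reverse_perm_def Suc_diff_Suc)

lemma disc_deriv_reverse_perm_comp:
  assumes "p permutes {1..m}"
  shows "disc_deriv m (reverse_perm m \<circ> p) = map uminus (disc_deriv m p)"
proof (rule nth_equalityI)
  fix i assume "i < length (disc_deriv m (reverse_perm m \<circ> p))"
  then have i: "i < m - 1"
    by simp
  then have "p (i + 1) \<in> {1..m}" "p (i + 2) \<in> {1..m}"
    using permutes_in_image[OF assms] by auto
  with i show "disc_deriv m (reverse_perm m \<circ> p) ! i = map uminus (disc_deriv m p) ! i"
    by (auto simp: nth_disc_deriv reverse_perm_def)
qed simp

definition block_perm :: "nat \<Rightarrow> nat \<Rightarrow> nat \<Rightarrow> (nat \<Rightarrow> nat) \<Rightarrow> nat \<Rightarrow> (nat \<Rightarrow> nat) \<Rightarrow> nat \<Rightarrow> nat" where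
  "block_perm a b r p s q i =
     (if i \<in> {1..a} then r + p i else if i \<in> {a<..a + b} then s + q (i - a) else i)"

lemma block_perm_permutes:
  assumes p: "p permutes {1..a}" and q: "q permutes {1..b}"
    and offsets: "(r = 0 \<and> s = a) \<or> (r = b \<and> s = 0)"
  shows "block_perm a b r p s q permutes {1..a + b}"
proof (rule bij_imp_permutes)
  have shift: "bij_betw (\<lambda>i. c + i) {1..d} {c + 1..c + d}" for c d :: nat
    by (rule bij_betw_byWitness[where f' = "\<lambda>i. i - c"]) auto
  have unshift: "bij_betw (\<lambda>i. i - a) {a<..a + b} {1..b}"
    by (rule bij_betw_byWitness[where f' = "\<lambda>i. a + i"]) auto
  have first: "bij_betw (block_perm a b r p s q) {1..a} {r + 1..r + a}"
    using bij_betw_trans[OF permutes_imp_bij[OF p] shift]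
    by (rule bij_betw_cong[THEN iffD1, rotated]) (simp add: block_perm_def)
  have second: "bij_betw (block_perm a b r p s q) {a<..a + b} {s + 1..s + b}"
    using bij_betw_trans[OF bij_betw_trans[OF unshift permutes_imp_bij[OF q]] shift]
    by (rule bij_betw_cong[THEN iffD1, rotated]) (simp add: block_perm_def)
  have "bij_betw (block_perm a b r p s q) ({1..a} \<union> {a<..a + b}) ({r + 1..r + a} \<union> {s + 1..s + b})"
    using offsets by (intro bij_betw_combine[OF first second]) auto
  moreover have "{1..a} \<union> {a<..a + b} = {1..a + b}" by auto
  moreover have "{r + 1..r + a} \<union> {s + 1..s + b} = {1..a + b}" using offsets by auto
  ultimately show "bij_betw (block_perm a b r p s q) {1..a + b} {1..a + b}" by simp
qed (auto simp: block_perm_def)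

lemma disc_deriv_block_perm:
  assumes "1 \<le> a" "1 \<le> b"
  shows "disc_deriv (a + b) (block_perm a b r p s q)
           = disc_deriv a p @ [int (s + q 1) - int (r + p a)] @ disc_deriv b q"
proof (rule nth_equalityI)
  show "length (disc_deriv (a + b) (block_perm a b r p s q))
          = length (disc_deriv a p @ [int (s + q 1) - int (r + p a)] @ disc_deriv b q)"
    using assms by simp
next
  fix i assume "i < length (disc_deriv (a + b) (block_perm a b r p s q))"
  then have i: "i < a + b - 1" by simp
  consider "i + 1 < a" | "i + 1 = a" | "a < i + 1" by linarith
  then show "disc_deriv (a + b) (block_perm a b r p s q) ! i
               = (disc_deriv a p @ [int (s + q 1) - int (r + p a)] @ disc_deriv b q) ! i"
  proof cases
    case 1
    then have "i < a - 1" by linarith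
    with 1 show ?thesis by (simp add: nth_disc_deriv nth_append block_perm_def)
  next
    case 2
    then have "i = a - 1" by linarith
    with 2 show ?thesis using i assms by (simp add: nth_disc_deriv nth_append block_perm_def)
  next
    case 3
    then have idx: "i + 2 - a = (i - a) + 2" "i + 1 - a = (i - a) + 1" "i + 2 \<le> a + b"
      "i - a < b - 1" "\<not> i < a - 1" "i - (a - 1) = Suc (i - a)"
      using i assms by auto
    with 3 i have "disc_deriv (a + b) (block_perm a b r p s q) ! i = disc_deriv b q ! (i - a)"
      by (simp add: nth_disc_deriv block_perm_def)
    also have "\<dots> = (disc_deriv a p @ [int (s + q 1) - int (r + p a)] @ disc_deriv b q) ! i"
      using idx by (simp add: nth_append)
    finally show ?thesis .
  qed
qed

lemma perm_mat_dims [simp]: "dim_row (perm_mat m p) = m" "dim_col (perm_mat m p) = m"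
  by (simp_all add: perm_mat_def)

lemma perm_mat_carrier [simp]: "perm_mat m p \<in> carrier_mat m m"
  by (simp add: perm_mat_def)

lemma index_perm_mat:
  "i < m \<Longrightarrow> j < m \<Longrightarrow> perm_mat m p $$ (i, j) = (if p (Suc i) = Suc j then 1 else 0)"
  by (simp add: perm_mat_def)

lemma back_id_dims [simp]: "dim_row (back_id m) = m" "dim_col (back_id m) = m"
  by (simp_all add: back_id_def)

lemma back_id_carrier [simp]: "back_id m \<in> carrier_mat m m"
  by (simp add: back_id_def)

lemma index_back_id_mult:
  assumes "A \<in> carrier_mat m c" "i < m" "j < c"
  shows "(back_id m * A) $$ (i, j) = A $$ (m - 1 - i, j)"
proof -
  have "(back_id m * A) $$ (i, j) = (\<Sum>l\<in>{0..<m}. back_id m $$ (i, l) * A $$ (l, j))"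
    using assms by (simp add: scalar_prod_def)
  also have "\<dots> = (\<Sum>l\<in>{0..<m}. if l = m - 1 - i then A $$ (l, j) else 0)"
    using assms by (intro sum.cong) (auto simp: back_id_def)
  also have "\<dots> = A $$ (m - 1 - i, j)"
    using assms by simp
  finally show ?thesis .
qed

lemma index_mult_back_id:
  assumes "A \<in> carrier_mat r m" "i < r" "j < m"
  shows "(A * back_id m) $$ (i, j) = A $$ (i, m - 1 - j)"
proof -
  have "(A * back_id m) $$ (i, j) = (\<Sum>l\<in>{0..<m}. A $$ (i, l) * back_id m $$ (l, j))"
    using assms by (simp add: scalar_prod_def)
  also have "\<dots> = (\<Sum>l\<in>{0..<m}. if l = m - 1 - j then A $$ (i, l) else 0)"
    using assms by (intro sum.cong) (auto simp: back_id_def)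
  also have "\<dots> = A $$ (i, m - 1 - j)"
    using assms by simp
  finally show ?thesis .
qed

lemma back_id_mult_perm_mat:
  "back_id m * perm_mat m p = perm_mat m (p \<circ> reverse_perm m)" (is "?L = ?R")
proof (rule eq_matI)
  fix i j assume "i < dim_row ?R" "j < dim_col ?R"
  then have ij: "i < m" "j < m" by simp_all
  then have "?L $$ (i, j) = perm_mat m p $$ (m - 1 - i, j)"
    by (intro index_back_id_mult) auto
  with ij show "?L $$ (i, j) = ?R $$ (i, j)"
    by (simp add: index_perm_mat reverse_perm_def Suc_diff_Suc)
qed simp_all

lemma perm_mat_mult_back_id:
  assumes "p permutes {1..m}"
  shows "perm_mat m p * back_id m = perm_mat m (reverse_perm m \<circ> p)" (is "?L = ?R")
proof (rule eq_matI)
  fix i j assume "i < dim_row ?R" "j < dim_col ?R"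
  then have ij: "i < m" "j < m" by simp_all
  have "?L $$ (i, j) = perm_mat m p $$ (i, m - 1 - j)"
    using ij by (intro index_mult_back_id) auto
  also have "\<dots> = (if p (Suc i) = m - j then 1 else 0)"
    using ij by (simp add: index_perm_mat Suc_diff_Suc)
  also have "\<dots> = ?R $$ (i, j)"
  proof -
    have "p (Suc i) \<in> {1..m}"
      using permutes_in_image[OF assms] ij by simp
    then have "p (Suc i) = m - j \<longleftrightarrow> reverse_perm m (p (Suc i)) = Suc j"
      using ij by (auto simp: reverse_perm_def)
    then show ?thesis
      using ij by (simp add: index_perm_mat)
  qed
  finally show "?L $$ (i, j) = ?R $$ (i, j)" .
qed auto

lemma block_perm_Suc:
  "i < a \<Longrightarrow> block_perm a b r p s q (Suc i) = r + p (Suc i)"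
  "a \<le> i \<Longrightarrow> i < a + b \<Longrightarrow> block_perm a b r p s q (Suc i) = s + q (Suc (i - a))"
  by (simp_all add: block_perm_def Suc_diff_le)

lemma perm_mat_block_diag:
  assumes "p permutes {1..a}" "q permutes {1..b}"
  shows "perm_mat (a + b) (block_perm a b 0 p a q)
           = four_block_mat (perm_mat a p) (0\<^sub>m a b) (0\<^sub>m b a) (perm_mat b q)" (is "?P = ?M")
proof (rule eq_matI)
  fix i j assume "i < dim_row ?M" "j < dim_col ?M"
  then have ij: "i < a + b" "j < a + b" by simp_all
  have p: "p (Suc i) \<in> {1..a}" if "i < a"
    using permutes_in_image[OF assms(1)] that by simp
  have q: "q (Suc (i - a)) \<in> {1..b}" if "a \<le> i"
    using permutes_in_image[OF assms(2), of "Suc (i - a)"] that ij by auto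
  show "?P $$ (i, j) = ?M $$ (i, j)"
    using ij p q by (subst index_mat_four_block; cases "i < a"; cases "j < a")
      (auto simp: index_perm_mat block_perm_Suc)
qed simp_all

lemma perm_mat_block_antidiag:
  assumes "p permutes {1..a}" "q permutes {1..b}"
  shows "perm_mat (a + b) (block_perm a b b p 0 q)
           = four_block_mat (0\<^sub>m a b) (perm_mat a p) (perm_mat b q) (0\<^sub>m b a)" (is "?P = ?M")
proof (rule eq_matI)
  fix i j assume "i < dim_row ?M" "j < dim_col ?M"
  then have ij: "i < a + b" "j < a + b" by simp_all
  have p: "p (Suc i) \<in> {1..a}" if "i < a"
    using permutes_in_image[OF assms(1)] that by simp
  have q: "q (Suc (i - a)) \<in> {1..b}" if "a \<le> i"
    using permutes_in_image[OF assms(2), of "Suc (i - a)"] that ij by auto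
  show "?P $$ (i, j) = ?M $$ (i, j)"
    using ij p q by (subst index_mat_four_block; cases "i < a"; cases "j < b")
      (auto simp: index_perm_mat block_perm_Suc)
qed simp_all

section \<open>The optimal permutations\<close>

lemma double_sum_list_upt: "2 * sum_list (map int [1..<a]) = int a * (int a - 1)"
proof (induction a)
  case (Suc a)
  then show ?case by (cases a) (auto simp: algebra_simps)
qed simp

definition costas_matrix :: "nat \<Rightarrow> int mat" where
  "costas_matrix n =
     (let k = n div 2 in
      if even n then four_block_mat (Pi_mat k) (0\<^sub>m k k) (0\<^sub>m k k) (back_id k * Pi_mat k)
      else if even k then
        four_block_mat (0\<^sub>m (k + 1) k) (back_id (k + 1) * Pi_mat (k + 1)) (Pi_mat k) (0\<^sub>m k (k + 1))
      else
        four_block_mat (0\<^sub>m (k + 1) k) (back_id (k + 1) * Pi_mat (k + 1) * back_id (k + 1))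
          (Pi_mat k * back_id k) (0\<^sub>m k (k + 1)))"

lemma costas_matrix_even:
  "costas_matrix (2 * k) = four_block_mat (Pi_mat k) (0\<^sub>m k k) (0\<^sub>m k k) (back_id k * Pi_mat k)"
  by (simp add: costas_matrix_def)

lemma costas_matrix_odd_even_half:
  "even k \<Longrightarrow> costas_matrix (2 * k + 1)
     = four_block_mat (0\<^sub>m (k + 1) k) (back_id (k + 1) * Pi_mat (k + 1)) (Pi_mat k) (0\<^sub>m k (k + 1))"
  by (simp add: costas_matrix_def)

lemma costas_matrix_odd_odd_half:
  "odd k \<Longrightarrow> costas_matrix (2 * k + 1)
     = four_block_mat (0\<^sub>m (k + 1) k) (back_id (k + 1) * Pi_mat (k + 1) * back_id (k + 1))
         (Pi_mat k * back_id k) (0\<^sub>m k (k + 1))"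
  by (simp add: costas_matrix_def)

lemma optimal_costas_even:
  assumes "1 \<le> k"
  defines "q \<equiv> block_perm k k 0 (pi_m k) k (pi_m k \<circ> reverse_perm k)"
  shows "q permutes {1..2 * k}" "distinct (disc_deriv (2 * k) q)"
    "\<forall>x\<in>set (disc_deriv (2 * k) q). \<bar>x\<bar> \<le> int k" "global_var (2 * k) q = int k ^ 2"
    "perm_mat (2 * k) q = costas_matrix (2 * k)"
proof -
  have n: "2 * k = k + k" by simp
  have perm: "pi_m k \<circ> reverse_perm k permutes {1..k}"
    using permutes_compose[OF reverse_perm_permutes pi_m_permutes] .
  show "q permutes {1..2 * k}"
    unfolding q_def n using pi_m_permutes perm by (rule block_perm_permutes) simp
  have "reverse_perm k 1 = k" using assms by (simp add: reverse_perm_def)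
  then have dd: "disc_deriv (2 * k) q = map zigzag [1..<k] @ [int k] @ map uminus (rev (map zigzag [1..<k]))"
    unfolding q_def n using assms
    by (simp add: disc_deriv_block_perm disc_deriv_comp_reverse_perm disc_deriv_pi_m)
  show "distinct (disc_deriv (2 * k) q)"
    unfolding dd using inj_zigzag
    by (auto simp: distinct_map inj_on_def zigzag_eq_neg_zigzag_iff) (auto simp: zigzag_def split: if_splits)
  show "\<forall>x\<in>set (disc_deriv (2 * k) q). \<bar>x\<bar> \<le> int k"
    unfolding dd by auto
  have "global_var (2 * k) q = 2 * sum_list (map int [1..<k]) + int k"
    unfolding global_var_def dd by (simp add: comp_def rev_map[symmetric])
  then show "global_var (2 * k) q = int k ^ 2"
    using double_sum_list_upt[of k] by (simp add: power2_eq_square algebra_simps)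
  show "perm_mat (2 * k) q = costas_matrix (2 * k)"
    unfolding costas_matrix_even unfolding q_def n Pi_mat_def back_id_mult_perm_mat
    using pi_m_permutes perm by (rule perm_mat_block_diag)
qed

lemma optimal_costas_odd_even_half:
  assumes "even k" "1 \<le> k"
  defines "q \<equiv> block_perm (k + 1) k k (pi_m (k + 1) \<circ> reverse_perm (k + 1)) 0 (pi_m k)"
  shows "q permutes {1..2 * k + 1}" "distinct (disc_deriv (2 * k + 1) q)"
    "\<forall>x\<in>set (disc_deriv (2 * k + 1) q). \<bar>x\<bar> \<le> int (k + 1)"
    "global_var (2 * k + 1) q = int k ^ 2 + int k + 1"
    "perm_mat (2 * k + 1) q = costas_matrix (2 * k + 1)"
proof -
  have n: "2 * k + 1 = (k + 1) + k" by simp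
  have perm: "pi_m (k + 1) \<circ> reverse_perm (k + 1) permutes {1..k + 1}"
    using permutes_compose[OF reverse_perm_permutes pi_m_permutes] .
  show "q permutes {1..2 * k + 1}"
    unfolding q_def n using perm pi_m_permutes by (rule block_perm_permutes) simp
  \<comment> \<open>Here the parity of k enters: for odd k the junction step would be -k, which already
    occurs in the first block.  The same holds, with signs reversed, in the odd-half case below.\<close>
  obtain h where h: "k = 2 * h" using assms(1) by blast
  have "pi_m k 1 = h" "pi_m (k + 1) 1 = h + 1"
    using pi_m_first[of k] pi_m_first[of "k + 1"] assms(2) h by simp_all
  moreover have "reverse_perm (k + 1) (k + 1) = 1"
    by (simp add: reverse_perm_def)
  ultimately have junction:
    "int (0 + pi_m k 1) - int (k + (pi_m (k + 1) \<circ> reverse_perm (k + 1)) (k + 1)) = - (int k + 1)"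
    using h by simp
  have "disc_deriv (2 * k + 1) q
      = disc_deriv (k + 1) (pi_m (k + 1) \<circ> reverse_perm (k + 1)) @ [- (int k + 1)] @ disc_deriv k (pi_m k)"
    unfolding q_def n disc_deriv_block_perm[OF le_add2 assms(2)] junction by simp
  also have "\<dots> = map uminus (rev (map zigzag [1..<k + 1])) @ [- (int k + 1)] @ map zigzag [1..<k]"
    by (simp only: disc_deriv_comp_reverse_perm disc_deriv_pi_m)
  finally have dd: "disc_deriv (2 * k + 1) q
      = map uminus (rev (map zigzag [1..<k + 1])) @ [- (int k + 1)] @ map zigzag [1..<k]" .
  show "distinct (disc_deriv (2 * k + 1) q)"
    unfolding dd using inj_zigzag
    by (auto simp: distinct_map inj_on_def zigzag_eq_neg_zigzag_iff) (auto simp: zigzag_def split: if_splits)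
  show "\<forall>x\<in>set (disc_deriv (2 * k + 1) q). \<bar>x\<bar> \<le> int (k + 1)"
    unfolding dd by auto
  have "global_var (2 * k + 1) q = sum_list (map int [1..<k + 1]) + (int k + 1) + sum_list (map int [1..<k])"
    unfolding global_var_def dd by (simp add: comp_def rev_map[symmetric])
  then show "global_var (2 * k + 1) q = int k ^ 2 + int k + 1"
    using double_sum_list_upt[of k] double_sum_list_upt[of "k + 1"]
    by (simp add: power2_eq_square algebra_simps)
  show "perm_mat (2 * k + 1) q = costas_matrix (2 * k + 1)"
    unfolding costas_matrix_odd_even_half[OF assms(1)]
    unfolding q_def n Pi_mat_def back_id_mult_perm_mat using perm pi_m_permutes
    by (rule perm_mat_block_antidiag)
qed

lemma optimal_costas_odd_odd_half:
  assumes "odd k"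
  defines "q \<equiv> block_perm (k + 1) k k (reverse_perm (k + 1) \<circ> (pi_m (k + 1) \<circ> reverse_perm (k + 1))) 0
                 (reverse_perm k \<circ> pi_m k)"
  shows "q permutes {1..2 * k + 1}" "distinct (disc_deriv (2 * k + 1) q)"
    "\<forall>x\<in>set (disc_deriv (2 * k + 1) q). \<bar>x\<bar> \<le> int (k + 1)"
    "global_var (2 * k + 1) q = int k ^ 2 + int k + 1"
    "perm_mat (2 * k + 1) q = costas_matrix (2 * k + 1)"
proof -
  have n: "2 * k + 1 = (k + 1) + k" by simp
  have k: "1 \<le> k" using assms(1) by (auto elim: oddE)
  have perm1: "pi_m (k + 1) \<circ> reverse_perm (k + 1) permutes {1..k + 1}"
    using permutes_compose[OF reverse_perm_permutes pi_m_permutes] .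
  have perm2: "reverse_perm (k + 1) \<circ> (pi_m (k + 1) \<circ> reverse_perm (k + 1)) permutes {1..k + 1}"
    using permutes_compose[OF perm1 reverse_perm_permutes] .
  have perm3: "reverse_perm k \<circ> pi_m k permutes {1..k}"
    using permutes_compose[OF pi_m_permutes reverse_perm_permutes] .
  show "q permutes {1..2 * k + 1}"
    unfolding q_def n using perm2 perm3 by (rule block_perm_permutes) simp
  obtain h where h: "k = 2 * h + 1" using assms(1) oddE by blast
  have "pi_m k 1 = h + 1" "pi_m (k + 1) 1 = h + 1"
    using pi_m_first[of k] pi_m_first[of "k + 1"] h by simp_all
  moreover have "reverse_perm (k + 1) (k + 1) = 1" "reverse_perm k (h + 1) = h + 1"
    "reverse_perm (k + 1) (h + 1) = h + 2"
    using h by (simp_all add: reverse_perm_def)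
  ultimately have junction: "int (0 + (reverse_perm k \<circ> pi_m k) 1)
      - int (k + (reverse_perm (k + 1) \<circ> (pi_m (k + 1) \<circ> reverse_perm (k + 1))) (k + 1)) = - (int k + 1)"
    using h by simp
  have "disc_deriv (2 * k + 1) q
      = disc_deriv (k + 1) (reverse_perm (k + 1) \<circ> (pi_m (k + 1) \<circ> reverse_perm (k + 1)))
          @ [- (int k + 1)] @ disc_deriv k (reverse_perm k \<circ> pi_m k)"
    unfolding q_def n disc_deriv_block_perm[OF le_add2 k] junction by simp
  also have "\<dots> = rev (map zigzag [1..<k + 1]) @ [- (int k + 1)] @ map uminus (map zigzag [1..<k])"
    unfolding disc_deriv_reverse_perm_comp[OF perm1] disc_deriv_reverse_perm_comp[OF pi_m_permutes]
      disc_deriv_comp_reverse_perm disc_deriv_pi_m by simp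
  finally have dd: "disc_deriv (2 * k + 1) q
      = rev (map zigzag [1..<k + 1]) @ [- (int k + 1)] @ map uminus (map zigzag [1..<k])" .
  show "distinct (disc_deriv (2 * k + 1) q)"
    unfolding dd using inj_zigzag
    by (auto simp: distinct_map inj_on_def zigzag_eq_neg_zigzag_iff) (auto simp: zigzag_def split: if_splits)
  show "\<forall>x\<in>set (disc_deriv (2 * k + 1) q). \<bar>x\<bar> \<le> int (k + 1)"
    unfolding dd by auto
  have "global_var (2 * k + 1) q = sum_list (map int [1..<k + 1]) + (int k + 1) + sum_list (map int [1..<k])"
    unfolding global_var_def dd by (simp add: comp_def rev_map[symmetric])
  then show "global_var (2 * k + 1) q = int k ^ 2 + int k + 1"
    using double_sum_list_upt[of k] double_sum_list_upt[of "k + 1"]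
    by (simp add: power2_eq_square algebra_simps)
  show "perm_mat (2 * k + 1) q = costas_matrix (2 * k + 1)"
    unfolding costas_matrix_odd_odd_half[OF assms(1)]
    unfolding q_def n Pi_mat_def back_id_mult_perm_mat perm_mat_mult_back_id[OF perm1]
      perm_mat_mult_back_id[OF pi_m_permutes]
    using perm2 perm3 by (rule perm_mat_block_antidiag)
qed

lemma optimal_costas_exists:
  assumes "2 \<le> n"
  obtains q where "q permutes {1..n}" "distinct (disc_deriv n q)"
    "\<forall>x\<in>set (disc_deriv n q). \<bar>x\<bar> \<le> int ((n + 1) div 2)"
    "4 * global_var n q = int (n^2 + 3 * (n mod 2))" "perm_mat n q = costas_matrix n"
proof -
  obtain k where n: "n = 2 * k \<or> n = 2 * k + 1"
    by (metis oddE evenE)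
  have k: "1 \<le> k"
    using n assms by linarith
  have "(2 * k + 1) mod 2 = 1"
    by presburger
  then have odd_sq: "int ((2 * k + 1)^2 + 3 * ((2 * k + 1) mod 2)) = 4 * (int k ^ 2 + int k + 1)"
    by (simp add: power2_eq_square algebra_simps)
  from n consider "n = 2 * k" | "n = 2 * k + 1" "even k" | "n = 2 * k + 1" "odd k"
    by blast
  then show ?thesis
  proof cases
    case 1
    then show ?thesis
      using optimal_costas_even[OF k] by (intro that[unfolded 1]) (simp_all add: power_mult_distrib)
  next
    case 2
    then show ?thesis
      using optimal_costas_odd_even_half[OF 2(2) k] odd_sq by (intro that[unfolded 2(1)]) simp_all
  next
    case 3
    then show ?thesis
      using optimal_costas_odd_odd_half[OF 3(2)] odd_sq by (intro that[unfolded 3(1)]) simp_all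
  qed
qed

lemma ceiling_half: "\<lceil>real n / 2\<rceil> = int ((n + 1) div 2)"
proof -
  have "\<lceil>real n / 2\<rceil> = - (- int n div 2)"
    using ceiling_divide_eq_div[of "int n" 2] by simp
  also have "\<dots> = int ((n + 1) div 2)"
    by presburger
  finally show ?thesis .
qed

theorem theorem3p2:
  fixes n :: nat
  assumes "n \<ge> 2"
  shows "(\<forall>p. one_costas n p \<longrightarrow> real_of_int (local_var n p) \<ge> real_of_int \<lceil>real n / 2\<rceil>)
     \<and> (\<exists>q. one_costas n q
           \<and> local_var n q = \<lceil>real n / 2\<rceil>
           \<and> (\<forall>k. n = 2 * k \<longrightarrow>
                 perm_mat n q = four_block_mat (Pi_mat k) (0\<^sub>m k k) (0\<^sub>m k k) (back_id k * Pi_mat k))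
           \<and> (\<forall>k. n = 2 * k + 1 \<and> even k \<longrightarrow>
                 perm_mat n q = four_block_mat (0\<^sub>m (k + 1) k) (back_id (k + 1) * Pi_mat (k + 1))
                                              (Pi_mat k) (0\<^sub>m k (k + 1)))
           \<and> (\<forall>k. n = 2 * k + 1 \<and> odd k \<longrightarrow>
                 perm_mat n q = four_block_mat (0\<^sub>m (k + 1) k)
                                              (back_id (k + 1) * Pi_mat (k + 1) * back_id (k + 1))
                                              (Pi_mat k * back_id k) (0\<^sub>m k (k + 1)))
           \<and> (\<forall>p. one_costas n p \<longrightarrow> global_var n q \<le> global_var n p)
           \<and> (even n \<longrightarrow> real_of_int (global_var n q) = real n ^ 2 / 4)
           \<and> (odd n \<longrightarrow> real_of_int (global_var n q) = (real n ^ 2 + 3) / 4))"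
proof -
  obtain q where q: "q permutes {1..n}" "distinct (disc_deriv n q)"
      "\<forall>x\<in>set (disc_deriv n q). \<bar>x\<bar> \<le> int ((n + 1) div 2)"
      "4 * global_var n q = int (n^2 + 3 * (n mod 2))" "perm_mat n q = costas_matrix n"
    using optimal_costas_exists[OF assms] by blast
  have costas: "one_costas n q"
    using q(1,2) by (simp add: one_costas_def)
  have "local_var n q \<le> int ((n + 1) div 2)"
    using q(3) local_var_le_iff[OF assms] by blast
  then have optimal_local: "local_var n q = int ((n + 1) div 2)"
    using local_var_lower_bound[OF costas assms] by simp
  have optimal_global: "global_var n q \<le> global_var n p" if "one_costas n p" for p
    using global_var_lower_bound[OF that assms] q(4) by linarith
  have "4 * real_of_int (global_var n q) = real n ^ 2 + 3 * real (n mod 2)"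
    using arg_cong[OF q(4), of real_of_int] by simp
  then have "even n \<longrightarrow> real_of_int (global_var n q) = real n ^ 2 / 4"
    "odd n \<longrightarrow> real_of_int (global_var n q) = (real n ^ 2 + 3) / 4"
    by (simp_all add: even_iff_mod_2_eq_zero odd_iff_mod_2_eq_one)
  then show ?thesis
    unfolding ceiling_half of_int_le_iff
    using local_var_lower_bound[OF _ assms] costas optimal_local optimal_global q(5)
    by (intro conjI exI[of _ q]) (auto simp: costas_matrix_def)
qed

end
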